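(* Let $\alpha\in[0,1)$ and let $$X(\sqrt{t},\alpha)=\{\sqrt{n}\,e^{2\pi i n\alpha}\ :\ n\in\mathbb{N}\}\subset\mathbb{C}.$$ (a) If $\alpha$ is badly approximable and its partial quotients are all bounded by the positive integer $B$, then $X(\sqrt{t},\alpha)$ is $6\sqrt{B}$-relatively dense. (b) If $X(\sqrt{t},\alpha)$ is $r$-relatively dense, then $\alpha$ is badly approximable and all its partial quotients are bounded by $B=\lfloor 96r^2\rfloor$. (c) If $\alpha$ is badly approximable with constant $C$, then $X(\sqrt{t},\alpha)$ is $\sqrt{C}/2$-uniformly discrete. (d) If $X(\sqrt{t},\alpha)$ is $s$-uniformly discrete, then $\alpha$ is badly approximable with constant $C=s^2/53$.
   Context: $\mathbb{C}$ is identified with $\mathbb{R}^2$, and $B(x,r)$ denotes the open disk of radius $r$ centered at $x$. A set $X\subset\mathbb{C}$ is $r$-relatively dense ($r>0$) if $B(x,r)\cap X\ne\emptyset$ for every $x\in\mathbb{C}$. It is $s$-uniformly discrete ($s>0$) if $\mathrm{Card}(B(x,s)\cap X)\le1$ for every $x\in\mathbb{C}$. A real number $\alpha$ is badly approximable with constant $C>0$ if $q|q\alpha-p|\ge C$ for all $(p,q)\in\mathbb{Z}\times\mathbb{N}$. Equivalently, the partial quotients $a_1,a_2,\dots$ of its continued fraction expansion $\alpha=[0;a_1,a_2,\dots]$ are bounded by some positive integer $B$. *)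

theory Defs
  imports "HOL-Analysis.Analysis"
begin

definition Xsqrt :: "real \<Rightarrow> complex set" where
  "Xsqrt \<alpha> = {complex_of_real (sqrt (real n)) * exp (2 * of_real pi * \<i> * of_real (real n * \<alpha>)) | n::nat. n \<ge> 1}"

definition rel_dense :: "real \<Rightarrow> complex set \<Rightarrow> bool" where
  "rel_dense r X \<longleftrightarrow> (\<forall>x. ball x r \<inter> X \<noteq> {})"

definition unif_discrete :: "real \<Rightarrow> complex set \<Rightarrow> bool" where
  "unif_discrete s X \<longleftrightarrow> (\<forall>x. finite (ball x s \<inter> X) \<and> card (ball x s \<inter> X) \<le> 1)"

definition badly_approx_const :: "real \<Rightarrow> real \<Rightarrow> bool" where
  "badly_approx_const \<alpha> C \<longleftrightarrow> (\<forall>(p::int) (q::nat). q \<ge> 1 \<longrightarrow> real q * \<bar>real q * \<alpha> - real_of_int p\<bar> \<ge> C)"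

definition badly_approx :: "real \<Rightarrow> bool" where
  "badly_approx \<alpha> \<longleftrightarrow> (\<exists>C>0. badly_approx_const \<alpha> C)"

text \<open>Continued fraction algorithm (Gauss map) for alpha in [0,1): remainders x_0 = alpha,
  x_k = frac(1/x_(k-1)) (and the expansion stops once a remainder is 0).
  The k-th partial quotient (k >= 1) exists iff x_(k-1) \<noteq> 0 and equals floor(1/x_(k-1)).\<close>
definition cf_rem :: "real \<Rightarrow> nat \<Rightarrow> real" where
  "cf_rem \<alpha> k = ((\<lambda>x. if x = 0 then 0 else frac (1 / x)) ^^ k) \<alpha>"

definition cf_quot :: "real \<Rightarrow> nat \<Rightarrow> int" where
  "cf_quot \<alpha> k = \<lfloor>1 / cf_rem \<alpha> (k - 1)\<rfloor>"

definition pq_bounded :: "real \<Rightarrow> nat \<Rightarrow> bool" where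
  "pq_bounded \<alpha> B \<longleftrightarrow> (\<forall>k\<ge>1. cf_rem \<alpha> (k - 1) \<noteq> 0 \<longrightarrow> cf_quot \<alpha> k \<le> int B)"

end

theory Submission
  imports Defs
begin

text \<open>Write e(t) = cis (2 pi t) and z_n = sqrt n * e(n \<alpha>). For unit vectors u, v one has
  |\<rho> u - R v|^2 = (\<rho> - R)^2 + \<rho> R |u - v|^2, so the distance between two points of the spiral
  splits into a radial and an angular term, and |e(m \<alpha>) - e(n \<alpha>)| is comparable to the distance
  from (m - n) \<alpha> to the nearest integer.

  Separation: for m = n + k the radial term is about k^2 / (4 n), while a badly approximable
  constant C makes the angular term at least n (2 C / k)^2; by AM-GM their sum is at least C.
  Conversely, if q |q \<alpha> - p| is small, the points z_n and z_(n+q) with n about q^2 / (2 s^2) are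
  too close.

  Density: near radius R the indices n with |n - R^2| \<le> q/2 form a run of q consecutive integers.
  If p/q is a convergent, p is a unit mod q, so along such a run n \<alpha> comes within
  1/(2q) + |q \<alpha> - p| of any prescribed angle; bounded partial quotients supply a convergent with q
  of size about sqrt B * R. Conversely, if q |q \<alpha> - p| is tiny, then all n \<alpha> with sqrt n near
  R = 3 q r lie close to multiples of 1/q, and the point of radius R at an angle halfway between two
  such multiples is at distance at least r from the spiral.\<close>

subsection \<open>Radial and angular distances\<close>

lemma cis_2pi_diff_int: "cis (2 * pi * (x - of_int l)) = cis (2 * pi * x)"
proof -
  have "cis (2 * pi * (x - of_int l)) = cis (2 * pi * x) / cis (2 * pi * of_int l)"
    by (simp only: cis_divide right_diff_distrib)
  also have "cis (2 * pi * of_int l) = 1"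
    by (rule cis_multiple_2pi) simp
  finally show ?thesis by simp
qed

lemma norm_cis_minus_1: "norm (cis t - 1) = 2 * \<bar>sin (t / 2)\<bar>"
proof -
  have "(norm (cis t - 1))\<^sup>2 = (cos t - 1)\<^sup>2 + (sin t)\<^sup>2"
    by (simp add: cmod_power2)
  also have "\<dots> = 2 - 2 * cos t"
    using sin_cos_squared_add[of t] by (simp add: power2_eq_square algebra_simps)
  also have "\<dots> = (2 * \<bar>sin (t / 2)\<bar>)\<^sup>2"
    using cos_double_sin[of "t / 2"] by (simp add: power2_eq_square)
  finally show ?thesis
    by (rule power2_eq_imp_eq) simp_all
qed

lemma norm_cis_diff: "norm (cis a - cis b) = 2 * \<bar>sin ((a - b) / 2)\<bar>"
proof -
  have "cis a - cis b = cis b * (cis (a - b) - 1)"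
    by (simp add: cis_mult right_diff_distrib)
  then show ?thesis
    by (simp add: norm_mult norm_cis_minus_1)
qed

lemma sin_ge_third: "0 \<le> x \<Longrightarrow> x \<le> pi / 2 \<Longrightarrow> x / 3 \<le> sin x"
proof -
  assume x: "0 \<le> x" "x \<le> pi / 2"
  have "\<bar>sin x - (\<Sum>m<3. sin_coeff m * x ^ m)\<bar> \<le> inverse (fact 3) * \<bar>x\<bar> ^ 3"
    by (rule Maclaurin_sin_bound)
  moreover have "(\<Sum>m<3. sin_coeff m * x ^ m) = x"
    by (simp add: numeral_3_eq_3 sin_coeff_def)
  moreover have "(fact 3 :: real) = 6"
    by (simp add: numeral_3_eq_3)
  ultimately have "\<bar>sin x - x\<bar> \<le> x ^ 3 / 6"
    using x by simp
  then have "x - x ^ 3 / 6 \<le> sin x"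
    using abs_le_D2 by fastforce
  moreover have "x ^ 3 \<le> 4 * x"
  proof -
    have "x * x \<le> 2 * 2"
      using x pi_less_4 by (intro mult_mono) auto
    then show ?thesis
      using mult_right_mono[OF _ x(1)] by (simp add: power3_eq_cube)
  qed
  ultimately show ?thesis by linarith
qed

lemma norm_cis_2pi_diff: "norm (cis (2 * pi * s) - cis (2 * pi * t)) = 2 * \<bar>sin (pi * (s - t))\<bar>"
proof -
  have "(2 * pi * s - 2 * pi * t) / 2 = pi * (s - t)"
    by (simp add: field_simps)
  then show ?thesis
    by (simp only: norm_cis_diff)
qed

lemma norm_cis_2pi_diff_le: "norm (cis (2 * pi * s) - cis (2 * pi * t)) \<le> 2 * pi * \<bar>s - t - of_int l\<bar>"
proof -
  have "norm (cis (2 * pi * s) - cis (2 * pi * t)) = 2 * \<bar>sin (pi * (s - of_int l - t))\<bar>"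
    by (simp only: norm_cis_2pi_diff flip: cis_2pi_diff_int[of s l])
  also have "\<dots> \<le> 2 * \<bar>pi * (s - t - of_int l)\<bar>"
    using abs_sin_x_le_abs_x by (simp add: algebra_simps)
  finally show ?thesis by (simp add: abs_mult)
qed

lemma norm_cis_2pi_diff_ge:
  "2 * \<bar>s - t - of_int (round (s - t))\<bar> \<le> norm (cis (2 * pi * s) - cis (2 * pi * t))"
proof -
  define y where "y = s - t - of_int (round (s - t))"
  have y: "\<bar>y\<bar> \<le> 1 / 2"
    using of_int_round_abs_le[of "s - t"] by (simp add: y_def abs_minus_commute)
  have "pi * \<bar>y\<bar> \<le> pi"
    using y mult_left_mono[of "\<bar>y\<bar>" 1 pi] by simp
  then have "0 \<le> sin (pi * \<bar>y\<bar>)"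
    by (intro sin_ge_zero) auto
  then have sin_abs: "sin (pi * \<bar>y\<bar>) = \<bar>sin (pi * y)\<bar>"
    by (cases "y \<ge> 0") (auto simp: abs_of_neg abs_if)
  have "pi * \<bar>y\<bar> / 3 \<le> sin (pi * \<bar>y\<bar>)"
    using y by (intro sin_ge_third) auto
  then have "2 * \<bar>y\<bar> \<le> 2 * \<bar>sin (pi * y)\<bar>"
    using sin_abs pi_gt3 mult_right_mono[of 3 pi "\<bar>y\<bar>"] by linarith
  also have "\<dots> = norm (cis (2 * pi * s) - cis (2 * pi * t))"
    by (simp only: norm_cis_2pi_diff y_def flip: cis_2pi_diff_int[of s "round (s - t)"])
      (simp add: algebra_simps)
  finally show ?thesis
    by (simp only: y_def)
qed

lemma norm_polar_diff_sq:
  fixes u v :: complex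
  assumes "norm u = 1" "norm v = 1"
  shows "(norm (of_real \<rho> * u - of_real R * v))\<^sup>2 = (\<rho> - R)\<^sup>2 + \<rho> * R * (norm (u - v))\<^sup>2"
proof -
  have "(Re u)\<^sup>2 + (Im u)\<^sup>2 = 1" "(Re v)\<^sup>2 + (Im v)\<^sup>2 = 1"
    using assms by (simp_all add: cmod_def)
  moreover have "(norm (of_real \<rho> * u - of_real R * v))\<^sup>2 = (\<rho> * Re u - R * Re v)\<^sup>2 + (\<rho> * Im u - R * Im v)\<^sup>2"
    "(norm (u - v))\<^sup>2 = (Re u - Re v)\<^sup>2 + (Im u - Im v)\<^sup>2"
    by (simp_all add: cmod_power2)
  ultimately show ?thesis
    by algebra
qed

lemma min_mult_norm_le_norm_polar_diff:
  fixes u v :: complex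
  assumes "norm u = 1" "norm v = 1" "0 \<le> \<rho>" "0 \<le> R"
  shows "min \<rho> R * norm (u - v) \<le> norm (of_real \<rho> * u - of_real R * v)"
proof (rule power2_le_imp_le)
  have "min \<rho> R * min \<rho> R \<le> \<rho> * R"
    using assms by (intro mult_mono) auto
  then have "(min \<rho> R * min \<rho> R) * (norm (u - v))\<^sup>2 \<le> \<rho> * R * (norm (u - v))\<^sup>2"
    by (rule mult_right_mono) simp
  then have "(min \<rho> R * norm (u - v))\<^sup>2 \<le> \<rho> * R * (norm (u - v))\<^sup>2"
    by (simp add: power2_eq_square mult_ac)
  then show "(min \<rho> R * norm (u - v))\<^sup>2 \<le> (norm (of_real \<rho> * u - of_real R * v))\<^sup>2"
    using norm_polar_diff_sq[OF assms(1,2), of \<rho> R] zero_le_power2[of "\<rho> - R"] by linarith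
qed simp

lemma norm_polar_diff_le:
  fixes u v :: complex
  assumes "norm u = 1" "0 \<le> R"
  shows "norm (of_real \<rho> * u - of_real R * v) \<le> \<bar>\<rho> - R\<bar> + R * norm (u - v)"
proof -
  have "norm (of_real \<rho> * u - of_real R * v) = norm (of_real (\<rho> - R) * u + of_real R * (u - v))"
    by (simp add: algebra_simps)
  also have "\<dots> \<le> norm (of_real (\<rho> - R) * u) + norm (of_real R * (u - v))"
    by (rule norm_triangle_ineq)
  also have "\<dots> = \<bar>\<rho> - R\<bar> + R * norm (u - v)"
    using assms by (simp only: norm_mult norm_of_real) simp
  finally show ?thesis .
qed

lemma abs_sqrt_diff_mult:
  assumes "0 \<le> x" "0 \<le> R"
  shows "\<bar>sqrt x - R\<bar> * (sqrt x + R) = \<bar>x - R\<^sup>2\<bar>"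
proof -
  have "x - R\<^sup>2 = (sqrt x - R) * (sqrt x + R)"
    using assms by (simp add: algebra_simps power2_eq_square)
  then show ?thesis
    using assms by (simp add: abs_mult)
qed

lemma abs_diff_sq_le:
  assumes "0 \<le> x" "0 \<le> R" "\<bar>sqrt x - R\<bar> \<le> r"
  shows "\<bar>x - R\<^sup>2\<bar> \<le> r * (2 * R + r)"
proof -
  have "sqrt x + R \<le> 2 * R + r"
    using assms(3) by linarith
  then have "\<bar>sqrt x - R\<bar> * (sqrt x + R) \<le> r * (2 * R + r)"
    using assms by (intro mult_mono) auto
  then show ?thesis
    using abs_sqrt_diff_mult[OF assms(1,2)] by simp
qed

lemma abs_sqrt_diff_le:
  assumes "0 \<le> x" "0 < R"
  shows "\<bar>sqrt x - R\<bar> \<le> \<bar>x - R\<^sup>2\<bar> / R"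
proof -
  have "\<bar>sqrt x - R\<bar> * R \<le> \<bar>sqrt x - R\<bar> * (sqrt x + R)"
    using assms by (intro mult_left_mono) auto
  also have "\<dots> = \<bar>x - R\<^sup>2\<bar>"
    using assms by (intro abs_sqrt_diff_mult) auto
  finally show ?thesis
    using assms(2) by (simp add: field_simps)
qed

subsection \<open>Continued fractions\<close>

lemma cf_rem_0 [simp]: "cf_rem \<alpha> 0 = \<alpha>"
  by (simp add: cf_rem_def)

lemma cf_rem_Suc: "cf_rem \<alpha> (Suc k) = (if cf_rem \<alpha> k = 0 then 0 else frac (1 / cf_rem \<alpha> k))"
  by (simp add: cf_rem_def)

lemma cf_quot_Suc: "cf_quot \<alpha> (Suc k) = \<lfloor>1 / cf_rem \<alpha> k\<rfloor>"
  by (simp add: cf_quot_def)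

lemma cf_rem_bounds:
  assumes "0 \<le> \<alpha>" "\<alpha> < 1"
  shows "0 \<le> cf_rem \<alpha> k" "cf_rem \<alpha> k < 1"
  using assms by (induction k) (auto simp: cf_rem_Suc frac_lt_1)

lemma cf_rem_Suc_eq:
  "cf_rem \<alpha> k \<noteq> 0 \<Longrightarrow> cf_rem \<alpha> (Suc k) = 1 / cf_rem \<alpha> k - of_int (cf_quot \<alpha> (Suc k))"
  by (simp add: cf_rem_Suc cf_quot_Suc frac_def)

lemma cf_rem_eq_0_mono:
  assumes "cf_rem \<alpha> i = 0" "i \<le> j"
  shows "cf_rem \<alpha> j = 0"
  using assms(2) by (induction rule: dec_induct) (simp_all add: assms(1) cf_rem_Suc)

lemma cf_quot_nonneg: "0 \<le> \<alpha> \<Longrightarrow> \<alpha> < 1 \<Longrightarrow> 0 \<le> cf_quot \<alpha> (Suc k)"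
  using cf_rem_bounds[of \<alpha> k] by (simp add: cf_quot_Suc)

lemma cf_quot_ge_1:
  assumes "0 \<le> \<alpha>" "\<alpha> < 1" "cf_rem \<alpha> k \<noteq> 0"
  shows "1 \<le> cf_quot \<alpha> (Suc k)"
proof -
  have "1 < 1 / cf_rem \<alpha> k"
    using cf_rem_bounds[OF assms(1,2), of k] assms(3) by simp
  then show ?thesis
    by (simp add: cf_quot_Suc le_floor_iff)
qed

text \<open>Convergents are indexed one step later than usual: cf_den (k + 1) is the classical
  q_k, and cf_den 0 = 0, cf_num 0 = 1 are q_(-1) and p_(-1).\<close>

fun cf_den :: "real \<Rightarrow> nat \<Rightarrow> int" where
  "cf_den \<alpha> 0 = 0"
| "cf_den \<alpha> (Suc 0) = 1"
| "cf_den \<alpha> (Suc (Suc k)) = cf_quot \<alpha> (Suc k) * cf_den \<alpha> (Suc k) + cf_den \<alpha> k"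

fun cf_num :: "real \<Rightarrow> nat \<Rightarrow> int" where
  "cf_num \<alpha> 0 = 1"
| "cf_num \<alpha> (Suc 0) = 0"
| "cf_num \<alpha> (Suc (Suc k)) = cf_quot \<alpha> (Suc k) * cf_num \<alpha> (Suc k) + cf_num \<alpha> k"

definition cf_err :: "real \<Rightarrow> nat \<Rightarrow> real" where
  "cf_err \<alpha> k = of_int (cf_den \<alpha> k) * \<alpha> - of_int (cf_num \<alpha> k)"

lemma cf_err_Suc_Suc:
  "cf_err \<alpha> (Suc (Suc k)) = of_int (cf_quot \<alpha> (Suc k)) * cf_err \<alpha> (Suc k) + cf_err \<alpha> k"
  by (simp add: cf_err_def algebra_simps)

lemma cf_det: "cf_den \<alpha> (Suc k) * cf_num \<alpha> k - cf_den \<alpha> k * cf_num \<alpha> (Suc k) = (-1) ^ k"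
  by (induction k rule: nat.induct) (auto simp: algebra_simps)

lemma coprime_cf_num_den: "coprime (cf_num \<alpha> k) (cf_den \<alpha> k)"
proof (cases k)
  case (Suc j)
  show ?thesis
  proof (rule coprimeI)
    fix c assume "c dvd cf_num \<alpha> k" "c dvd cf_den \<alpha> k"
    then have "c dvd cf_den \<alpha> (Suc j) * cf_num \<alpha> j - cf_den \<alpha> j * cf_num \<alpha> (Suc j)"
      unfolding Suc by (simp add: dvd_diff)
    then show "is_unit c"
      unfolding cf_det by (rule dvd_unit_imp_unit) simp
  qed
qed simp

lemma cf_den_nonneg: "0 \<le> \<alpha> \<Longrightarrow> \<alpha> < 1 \<Longrightarrow> 0 \<le> cf_den \<alpha> k"
  by (induction \<alpha> k rule: cf_den.induct) (auto intro!: add_nonneg_nonneg mult_nonneg_nonneg cf_quot_nonneg)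

lemma cf_den_pos_mono:
  assumes "0 \<le> \<alpha>" "\<alpha> < 1" "\<forall>i<k. cf_rem \<alpha> i \<noteq> 0"
  shows "1 \<le> cf_den \<alpha> (Suc k) \<and> cf_den \<alpha> k \<le> cf_den \<alpha> (Suc k)"
  using assms(3)
proof (induction k)
  case (Suc k)
  then have "1 \<le> cf_den \<alpha> (Suc k)" "1 \<le> cf_quot \<alpha> (Suc k)"
    using cf_quot_ge_1[OF assms(1,2)] by auto
  then have "cf_den \<alpha> (Suc k) \<le> cf_quot \<alpha> (Suc k) * cf_den \<alpha> (Suc k)"
    using mult_right_mono[of 1 "cf_quot \<alpha> (Suc k)" "cf_den \<alpha> (Suc k)"] by simp
  then show ?case
    using \<open>1 \<le> cf_den \<alpha> (Suc k)\<close> cf_den_nonneg[OF assms(1,2), of k]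
    unfolding cf_den.simps by (intro conjI) linarith+
qed simp

lemma cf_err_Suc:
  assumes "0 \<le> \<alpha>" "\<alpha> < 1" "\<forall>i<k. cf_rem \<alpha> i \<noteq> 0"
  shows "cf_err \<alpha> (Suc k) = - cf_rem \<alpha> k * cf_err \<alpha> k"
  using assms(3)
proof (induction k)
  case 0
  show ?case by (simp add: cf_err_def)
next
  case (Suc k)
  have "cf_rem \<alpha> k \<noteq> 0"
    using Suc.prems by simp
  then show ?case
    using Suc by (simp add: cf_err_Suc_Suc cf_rem_Suc_eq field_simps)
qed

lemma cf_den_err_sum:
  assumes "0 \<le> \<alpha>" "\<alpha> < 1" "\<forall>i<k. cf_rem \<alpha> i \<noteq> 0"
  shows "of_int (cf_den \<alpha> (Suc k)) * \<bar>cf_err \<alpha> k\<bar> + of_int (cf_den \<alpha> k) * \<bar>cf_err \<alpha> (Suc k)\<bar> = 1"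
  using assms(3)
proof (induction k)
  case 0
  show ?case by (simp add: cf_err_def)
next
  case (Suc k)
  define x where "x = cf_rem \<alpha> k"
  have x: "0 < x" "x \<noteq> 0"
    using Suc.prems cf_rem_bounds[OF assms(1,2), of k] by (auto simp: x_def)
  have err1: "\<bar>cf_err \<alpha> (Suc k)\<bar> = x * \<bar>cf_err \<alpha> k\<bar>"
    using cf_err_Suc[OF assms(1,2), of k] Suc.prems x by (simp add: x_def abs_mult)
  have err2: "\<bar>cf_err \<alpha> (Suc (Suc k))\<bar> = cf_rem \<alpha> (Suc k) * \<bar>cf_err \<alpha> (Suc k)\<bar>"
    using cf_err_Suc[OF assms(1,2), of "Suc k"] Suc.prems cf_rem_bounds[OF assms(1,2), of "Suc k"]
    by (simp add: abs_mult)
  have "of_int (cf_den \<alpha> (Suc (Suc k))) * \<bar>cf_err \<alpha> (Suc k)\<bar> + of_int (cf_den \<alpha> (Suc k)) * \<bar>cf_err \<alpha> (Suc (Suc k))\<bar>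
      = of_int (cf_den \<alpha> (Suc k)) * \<bar>cf_err \<alpha> (Suc k)\<bar> * (of_int (cf_quot \<alpha> (Suc k)) + cf_rem \<alpha> (Suc k))
        + of_int (cf_den \<alpha> k) * \<bar>cf_err \<alpha> (Suc k)\<bar>"
    by (simp add: err2 algebra_simps)
  also have "of_int (cf_quot \<alpha> (Suc k)) + cf_rem \<alpha> (Suc k) = 1 / x"
    using cf_rem_Suc_eq[of \<alpha> k] x by (simp add: x_def)
  also have "of_int (cf_den \<alpha> (Suc k)) * \<bar>cf_err \<alpha> (Suc k)\<bar> * (1 / x) = of_int (cf_den \<alpha> (Suc k)) * \<bar>cf_err \<alpha> k\<bar>"
    using x by (simp add: err1)
  finally show ?case
    using Suc by simp
qed

lemma cf_den_Suc_err_le_1: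
  assumes "0 \<le> \<alpha>" "\<alpha> < 1" "\<forall>i<k. cf_rem \<alpha> i \<noteq> 0"
  shows "of_int (cf_den \<alpha> (Suc k)) * \<bar>cf_err \<alpha> k\<bar> \<le> 1"
  using cf_den_err_sum[OF assms] cf_den_nonneg[OF assms(1,2), of k]
  by (smt (verit) mult_nonneg_nonneg of_int_0_le_iff abs_ge_zero)

lemma cf_den_err_le_rem:
  assumes "0 \<le> \<alpha>" "\<alpha> < 1" "\<forall>i<k. cf_rem \<alpha> i \<noteq> 0"
  shows "of_int (cf_den \<alpha> (Suc k)) * \<bar>cf_err \<alpha> (Suc k)\<bar> \<le> cf_rem \<alpha> k"
proof -
  have "of_int (cf_den \<alpha> (Suc k)) * \<bar>cf_err \<alpha> (Suc k)\<bar>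
      = cf_rem \<alpha> k * (of_int (cf_den \<alpha> (Suc k)) * \<bar>cf_err \<alpha> k\<bar>)"
    using cf_err_Suc[OF assms] cf_rem_bounds[OF assms(1,2), of k] by (simp add: abs_mult)
  also have "\<dots> \<le> cf_rem \<alpha> k"
    using cf_den_Suc_err_le_1[OF assms] cf_rem_bounds[OF assms(1,2), of k]
    by (simp add: mult_left_le)
  finally show ?thesis .
qed

lemma cf_den_ge_index:
  assumes "0 \<le> \<alpha>" "\<alpha> < 1" "\<forall>i. cf_rem \<alpha> i \<noteq> 0"
  shows "int k \<le> cf_den \<alpha> (Suc k)"
proof (induction k)
  case (Suc k)
  have "1 \<le> cf_quot \<alpha> (Suc k)"
    using cf_quot_ge_1[OF assms(1,2)] assms(3) by blast
  then have "cf_den \<alpha> (Suc k) + cf_den \<alpha> k \<le> cf_den \<alpha> (Suc (Suc k))"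
    using mult_right_mono[OF _ cf_den_nonneg[OF assms(1,2), of "Suc k"]] by fastforce
  moreover have "int k + 1 \<le> cf_den \<alpha> (Suc k) + cf_den \<alpha> k"
  proof (cases k)
    case (Suc j)
    then have "1 \<le> cf_den \<alpha> k"
      using cf_den_pos_mono[OF assms(1,2), of j] assms(3) by simp
    then show ?thesis
      using Suc.IH by linarith
  qed simp
  ultimately show ?case
    by (simp only: of_nat_Suc)
qed simp

lemma cf_den_Suc_Suc_le:
  assumes "0 \<le> \<alpha>" "\<alpha> < 1" "\<forall>i\<le>k. cf_rem \<alpha> i \<noteq> 0" "pq_bounded \<alpha> B"
  shows "cf_den \<alpha> (Suc (Suc k)) \<le> (int B + 1) * cf_den \<alpha> (Suc k)"
proof -
  have "cf_quot \<alpha> (Suc k) \<le> int B"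
    using assms(3,4) unfolding pq_bounded_def by auto
  moreover have "1 \<le> cf_den \<alpha> (Suc k)" "cf_den \<alpha> k \<le> cf_den \<alpha> (Suc k)"
    using cf_den_pos_mono[OF assms(1,2), of k] assms(3) by auto
  ultimately have "cf_quot \<alpha> (Suc k) * cf_den \<alpha> (Suc k) + cf_den \<alpha> k \<le> int B * cf_den \<alpha> (Suc k) + cf_den \<alpha> (Suc k)"
    by (intro add_mono mult_right_mono) auto
  then show ?thesis
    by (simp add: algebra_simps)
qed

lemma cf_rem_nonzero_if_badly_approx:
  assumes "0 \<le> \<alpha>" "\<alpha> < 1" "badly_approx \<alpha>"
  shows "cf_rem \<alpha> k \<noteq> 0"
proof (induction k rule: less_induct)
  case (less k)
  obtain C where C: "C > 0" "badly_approx_const \<alpha> C"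
    using assms(3) unfolding badly_approx_def by blast
  show ?case
  proof
    assume "cf_rem \<alpha> k = 0"
    then have "cf_err \<alpha> (Suc k) = 0"
      using cf_err_Suc[OF assms(1,2)] less by simp
    have "\<forall>i<k. cf_rem \<alpha> i \<noteq> 0"
      using less by blast
    define q where "q = nat (cf_den \<alpha> (Suc k))"
    have q: "1 \<le> q" "real q = of_int (cf_den \<alpha> (Suc k))"
      using cf_den_pos_mono[OF assms(1,2) \<open>\<forall>i<k. cf_rem \<alpha> i \<noteq> 0\<close>] by (auto simp: q_def)
    have "C \<le> real q * \<bar>real q * \<alpha> - of_int (cf_num \<alpha> (Suc k))\<bar>"
      using C(2) q(1) unfolding badly_approx_const_def by blast
    also have "\<dots> = 0"
      using \<open>cf_err \<alpha> (Suc k) = 0\<close> by (simp add: q(2) cf_err_def)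
    finally show False
      using C(1) by simp
  qed
qed

lemma pq_bounded_if_badly_approx_const:
  assumes "0 \<le> \<alpha>" "\<alpha> < 1" "C > 0" "badly_approx_const \<alpha> C"
  shows "pq_bounded \<alpha> (nat \<lfloor>1 / C\<rfloor>)"
  unfolding pq_bounded_def
proof (intro allI impI)
  fix k :: nat assume "1 \<le> k" "cf_rem \<alpha> (k - 1) \<noteq> 0"
  then obtain j where k: "k = Suc j" and nz: "cf_rem \<alpha> j \<noteq> 0"
    by (cases k) auto
  have nz_before: "\<forall>i<j. cf_rem \<alpha> i \<noteq> 0"
    using cf_rem_eq_0_mono nz less_imp_le by blast
  have x: "0 < cf_rem \<alpha> j"
    using cf_rem_bounds[OF assms(1,2), of j] nz by simp
  define q where "q = nat (cf_den \<alpha> (Suc j))"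
  have q: "1 \<le> q" "real q = of_int (cf_den \<alpha> (Suc j))"
    using cf_den_pos_mono[OF assms(1,2) nz_before] by (auto simp: q_def)
  have "C \<le> real q * \<bar>real q * \<alpha> - of_int (cf_num \<alpha> (Suc j))\<bar>"
    using assms(4) q(1) unfolding badly_approx_const_def by blast
  also have "\<dots> \<le> cf_rem \<alpha> j"
    using cf_den_err_le_rem[OF assms(1,2) nz_before] by (simp add: q(2) cf_err_def)
  finally have "1 / cf_rem \<alpha> j \<le> 1 / C"
    using assms(3) x by (simp add: divide_le_cancel frac_le)
  then have "cf_quot \<alpha> k \<le> \<lfloor>1 / C\<rfloor>"
    by (simp add: k cf_quot_Suc floor_mono)
  then show "cf_quot \<alpha> k \<le> int (nat \<lfloor>1 / C\<rfloor>)"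
    by linarith
qed

lemma ex_bracketing_index:
  fixes f :: "nat \<Rightarrow> 'a :: linorder"
  assumes "f 0 \<le> N" "N < f j"
  shows "\<exists>k. f k \<le> N \<and> N < f (Suc k)"
  using assms(2)
proof (induction j)
  case 0
  then show ?case using assms(1) by simp
next
  case (Suc j)
  then show ?case by (cases "N < f j") (auto simp: not_less)
qed

lemma exists_convergent_bracket:
  assumes "0 \<le> \<alpha>" "\<alpha> < 1" "\<forall>i. cf_rem \<alpha> i \<noteq> 0" "pq_bounded \<alpha> B" "1 \<le> N"
  shows "\<exists>p q. coprime p q \<and> 1 \<le> q \<and> q \<le> int N \<and> int N < (int B + 1) * q
    \<and> real N * \<bar>of_int q * \<alpha> - of_int p\<bar> \<le> 1"
proof -
  have "int N < cf_den \<alpha> (Suc (Suc N))"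
    using cf_den_ge_index[OF assms(1-3), of "Suc N"] by simp
  moreover have "cf_den \<alpha> (Suc 0) \<le> int N"
    using assms(5) by simp
  ultimately obtain k where k: "cf_den \<alpha> (Suc k) \<le> int N" "int N < cf_den \<alpha> (Suc (Suc k))"
    using ex_bracketing_index[of "\<lambda>k. cf_den \<alpha> (Suc k)" "int N" "Suc N"] by blast
  then have "int N \<le> cf_den \<alpha> (Suc (Suc k))"
    by (intro less_imp_le)
  then have "real N \<le> of_int (cf_den \<alpha> (Suc (Suc k)))"
    by (metis of_int_le_iff of_int_of_nat_eq)
  then have "real N * \<bar>cf_err \<alpha> (Suc k)\<bar> \<le> of_int (cf_den \<alpha> (Suc (Suc k))) * \<bar>cf_err \<alpha> (Suc k)\<bar>"
    by (rule mult_right_mono) simp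
  also have "\<dots> \<le> 1"
    using cf_den_Suc_err_le_1[OF assms(1,2)] assms(3) by blast
  finally have "real N * \<bar>cf_err \<alpha> (Suc k)\<bar> \<le> 1" .
  moreover have "int N < (int B + 1) * cf_den \<alpha> (Suc k)"
    using k(2) cf_den_Suc_Suc_le[OF assms(1,2) _ assms(4)] assms(3) by (meson order_less_le_trans)
  moreover have "1 \<le> cf_den \<alpha> (Suc k)"
    using cf_den_pos_mono[OF assms(1,2)] assms(3) by blast
  ultimately show ?thesis
    using k(1) coprime_cf_num_den[of \<alpha> "Suc k"] unfolding cf_err_def by blast
qed

lemma exists_residue_mult_eq:
  fixes p q j :: int
  assumes "coprime p q" "1 \<le> q"
  shows "\<exists>m::nat. int m < q \<and> (\<exists>l. int m * p = j + q * l)"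
proof -
  obtain u v where uv: "u * p + v * q = 1"
    using bezout_int[of p q] assms(1) by (auto simp: coprime_iff_gcd_eq_1)
  define m where "m = nat ((j * u) mod q)"
  have m: "int m = j * u - (j * u div q) * q" "int m < q"
    using assms(2) by (simp_all add: m_def minus_div_mult_eq_mod)
  have "int m * p = j + q * (- j * v - (j * u div q) * p)"
    using uv unfolding m(1) by algebra
  then show ?thesis
    using m(2) by blast
qed

lemma abs_round_mult_div_le:
  fixes q s :: real
  assumes "0 < q"
  shows "\<bar>of_int (round (s * q)) / q - s\<bar> \<le> 1 / (2 * q)"
proof -
  have "of_int (round (s * q)) / q - s = (of_int (round (s * q)) - s * q) / q"
    using assms by (simp add: field_simps)
  then have "\<bar>of_int (round (s * q)) / q - s\<bar> = \<bar>of_int (round (s * q)) - s * q\<bar> / q"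
    using assms by simp
  also have "\<dots> \<le> (1 / 2) / q"
    using of_int_round_abs_le[of "s * q"] assms by (intro divide_right_mono) simp_all
  finally show ?thesis
    by simp
qed

lemma exists_multiple_near_shift:
  fixes p q :: int
  assumes "coprime p q" "1 \<le> q"
  shows "\<exists>m::nat. int m < q \<and>
    (\<exists>l::int. \<bar>real m * \<alpha> - s - of_int l\<bar> \<le> 1 / (2 * of_int q) + \<bar>of_int q * \<alpha> - of_int p\<bar>)"
proof -
  define j where "j = round (s * of_int q)"
  obtain m l where m: "int m < q" and "int m * p = j + q * l"
    using exists_residue_mult_eq[OF assms] by blast
  then have mp: "real m * of_int p = of_int j + of_int q * of_int l"
    by (metis of_int_add of_int_mult of_int_of_nat_eq)
  define e where "e = of_int q * \<alpha> - of_int p"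
  have q: "(1::real) \<le> of_int q"
    using assms(2) by simp
  have "real m \<le> of_int q"
    using m by (metis of_int_of_nat_eq of_int_le_iff less_imp_le)
  then have me: "\<bar>real m * e / of_int q\<bar> \<le> \<bar>e\<bar>"
    using q by (simp add: abs_mult field_simps mult_left_mono)
  have "real m * \<alpha> = (of_int j + of_int q * of_int l + real m * e) / of_int q"
    unfolding mp[symmetric] using q by (simp add: e_def field_simps)
  then have "real m * \<alpha> - s - of_int l = (of_int j / of_int q - s) + real m * e / of_int q"
    using q by (simp add: field_simps)
  then have "\<bar>real m * \<alpha> - s - of_int l\<bar> \<le> \<bar>of_int j / of_int q - s\<bar> + \<bar>real m * e / of_int q\<bar>"
    by (simp only: abs_triangle_ineq)
  moreover have "\<bar>of_int j / of_int q - s\<bar> \<le> 1 / (2 * of_int q)"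
    using abs_round_mult_div_le[of "of_int q" s] q by (simp add: j_def)
  ultimately have "\<bar>real m * \<alpha> - s - of_int l\<bar> \<le> 1 / (2 * of_int q) + \<bar>e\<bar>"
    using me by linarith
  then show ?thesis
    using m unfolding e_def by blast
qed

subsection \<open>The square-root spiral\<close>

definition sqrt_spiral :: "real \<Rightarrow> nat \<Rightarrow> complex" where
  "sqrt_spiral \<alpha> n = of_real (sqrt (real n)) * cis (2 * pi * (real n * \<alpha>))"

lemma Xsqrt_eq_image: "Xsqrt \<alpha> = sqrt_spiral \<alpha> ` {1..}"
proof -
  have cis: "exp (2 * of_real pi * \<i> * of_real t) = cis (2 * pi * t)" for t
    by (simp add: cis_conv_exp mult_ac)
  show ?thesis
    unfolding Xsqrt_def sqrt_spiral_def cis by auto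
qed

lemma norm_sqrt_spiral [simp]: "norm (sqrt_spiral \<alpha> n) = sqrt (real n)"
  by (simp add: sqrt_spiral_def norm_mult)

lemma norm_sqrt_spiral_diff_sq:
  "(norm (sqrt_spiral \<alpha> m - sqrt_spiral \<alpha> n))\<^sup>2 = (sqrt (real m) - sqrt (real n))\<^sup>2
    + sqrt (real m) * sqrt (real n) * (norm (cis (2 * pi * (real m * \<alpha>)) - cis (2 * pi * (real n * \<alpha>))))\<^sup>2"
  unfolding sqrt_spiral_def by (rule norm_polar_diff_sq) simp_all

lemma dist_polar_sqrt_spiral_le:
  assumes "0 \<le> R"
  shows "dist (of_real R * cis (2 * pi * \<theta>)) (sqrt_spiral \<alpha> n)
    \<le> \<bar>sqrt (real n) - R\<bar> + 2 * pi * R * \<bar>real n * \<alpha> - \<theta> - of_int l\<bar>"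
proof -
  have "dist (of_real R * cis (2 * pi * \<theta>)) (sqrt_spiral \<alpha> n)
      = norm (of_real (sqrt (real n)) * cis (2 * pi * (real n * \<alpha>)) - of_real R * cis (2 * pi * \<theta>))"
    by (simp add: dist_norm norm_minus_commute sqrt_spiral_def)
  also have "\<dots> \<le> \<bar>sqrt (real n) - R\<bar> + R * norm (cis (2 * pi * (real n * \<alpha>)) - cis (2 * pi * \<theta>))"
    using assms by (intro norm_polar_diff_le) simp_all
  also have "\<dots> \<le> \<bar>sqrt (real n) - R\<bar> + R * (2 * pi * \<bar>real n * \<alpha> - \<theta> - of_int l\<bar>)"
    using assms norm_cis_2pi_diff_le by (intro add_left_mono mult_left_mono) auto
  finally show ?thesis
    by (simp add: mult_ac)
qed

subsection \<open>Uniform discreteness\<close>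

lemma unif_discrete_iff: "unif_discrete s X \<longleftrightarrow> (\<forall>x\<in>X. \<forall>y\<in>X. x \<noteq> y \<longrightarrow> 2 * s \<le> dist x y)"
proof
  assume ud: "unif_discrete s X"
  show "\<forall>x\<in>X. \<forall>y\<in>X. x \<noteq> y \<longrightarrow> 2 * s \<le> dist x y"
  proof (intro ballI impI, rule ccontr)
    fix x y assume xy: "x \<in> X" "y \<in> X" "x \<noteq> y" "\<not> 2 * s \<le> dist x y"
    define c where "c = (x + y) / 2"
    have "dist c x = dist x y / 2" "dist c y = dist x y / 2"
      by (simp_all add: c_def dist_norm norm_minus_commute field_simps)
    then have "{x, y} \<subseteq> ball c s \<inter> X"
      using xy by auto
    moreover have "finite (ball c s \<inter> X)" "card (ball c s \<inter> X) \<le> 1"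
      using ud by (auto simp: unif_discrete_def)
    ultimately show False
      using card_mono[of "ball c s \<inter> X" "{x, y}"] xy(3) by simp
  qed
next
  assume sep: "\<forall>x\<in>X. \<forall>y\<in>X. x \<noteq> y \<longrightarrow> 2 * s \<le> dist x y"
  have single: "ball c s \<inter> X \<subseteq> {x}" if "x \<in> ball c s \<inter> X" for c x
  proof
    fix y assume y: "y \<in> ball c s \<inter> X"
    have "dist x y < 2 * s"
      using that y dist_triangle[of x y c] by (simp add: dist_commute)
    then show "y \<in> {x}"
      using sep that y by force
  qed
  show "unif_discrete s X"
    unfolding unif_discrete_def
  proof
    fix c
    have "ball c s \<inter> X = {} \<or> (\<exists>x. ball c s \<inter> X = {x})"
      using single by blast
    then show "finite (ball c s \<inter> X) \<and> card (ball c s \<inter> X) \<le> 1"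
      by auto
  qed
qed

lemma badly_approx_const_le_half:
  assumes "badly_approx_const \<alpha> C"
  shows "C \<le> 1 / 2"
proof -
  have "C \<le> real 1 * \<bar>real 1 * \<alpha> - of_int (round \<alpha>)\<bar>"
    using assms unfolding badly_approx_const_def by blast
  then show ?thesis
    using of_int_round_abs_le[of \<alpha>] by (simp add: abs_minus_commute)
qed

lemma le_sq_plus_sq_div:
  fixes y C :: real
  assumes "y \<noteq> 0"
  shows "C \<le> y\<^sup>2 + C\<^sup>2 / (4 * y\<^sup>2)"
proof (rule mult_right_le_imp_le)
  have "C * (4 * y\<^sup>2) \<le> 4 * y\<^sup>2 * y\<^sup>2 + C\<^sup>2"
    using zero_le_power2[of "2 * y\<^sup>2 - C"] by (simp add: power2_eq_square algebra_simps)
  also have "\<dots> = (y\<^sup>2 + C\<^sup>2 / (4 * y\<^sup>2)) * (4 * y\<^sup>2)"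
    using assms by (simp add: field_simps)
  finally show "C * (4 * y\<^sup>2) \<le> (y\<^sup>2 + C\<^sup>2 / (4 * y\<^sup>2)) * (4 * y\<^sup>2)" .
  show "0 < 4 * y\<^sup>2"
    using assms by simp
qed

lemma sq_div_le_mult_sq:
  fixes a b c C :: real
  assumes "1 \<le> a" "a < b" "b \<le> 4 * a" "0 < C" "2 * C \<le> (b\<^sup>2 - a\<^sup>2) * c"
  shows "C\<^sup>2 / (4 * (b - a)\<^sup>2) \<le> a * b * c\<^sup>2"
proof -
  have "(a + b)\<^sup>2 \<le> (2 * b)\<^sup>2"
    using assms by (intro power_mono) auto
  also have "\<dots> \<le> 4 * (4 * a) * b"
    using assms by (simp add: power2_eq_square mult_right_mono)
  finally have ab: "(a + b)\<^sup>2 / 16 \<le> a * b"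
    by simp
  have "(b - a) * (a + b) = b\<^sup>2 - a\<^sup>2" "0 < (b - a) * (a + b)"
    using assms(1,2) mult_strict_mono[of a b a b] by (simp_all add: power2_eq_square algebra_simps)
  then have "2 * C / ((b - a) * (a + b)) \<le> c"
    using assms(5) by (simp add: pos_divide_le_eq mult.commute)
  then have "(2 * C / ((b - a) * (a + b)))\<^sup>2 \<le> c\<^sup>2"
    using assms by (intro power_mono) auto
  then have "(a + b)\<^sup>2 / 16 * (2 * C / ((b - a) * (a + b)))\<^sup>2 \<le> a * b * c\<^sup>2"
    using ab assms(1,2) by (intro mult_mono) auto
  moreover have "(a + b)\<^sup>2 / 16 * (2 * C / ((b - a) * (a + b)))\<^sup>2 = C\<^sup>2 / (4 * (b - a)\<^sup>2)"
  proof -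
    define w where "w = (a + b)\<^sup>2"
    have "w \<noteq> 0"
      using assms(1,2) by (simp add: w_def)
    then have "w / 16 * (4 * C\<^sup>2 / ((b - a)\<^sup>2 * w)) = C\<^sup>2 / (4 * (b - a)\<^sup>2)"
      by (simp add: field_simps)
    then show ?thesis
      by (simp add: w_def power_divide power_mult_distrib)
  qed
  ultimately show ?thesis
    by simp
qed

lemma le_sq_diff_plus_mult_sq:
  fixes a b c C :: real
  assumes "1 \<le> a" "a < b" "0 < C" "C \<le> 1 / 2" "2 * C \<le> (b\<^sup>2 - a\<^sup>2) * c"
  shows "C \<le> (b - a)\<^sup>2 + a * b * c\<^sup>2"
proof (cases "b \<le> 4 * a")
  case True
  have "C \<le> (b - a)\<^sup>2 + C\<^sup>2 / (4 * (b - a)\<^sup>2)"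
    using assms(2) by (intro le_sq_plus_sq_div) simp
  also have "\<dots> \<le> (b - a)\<^sup>2 + a * b * c\<^sup>2"
    using sq_div_le_mult_sq[OF assms(1,2) True assms(3,5)] by simp
  finally show ?thesis .
next
  case False
  then have "1 \<le> (b - a)\<^sup>2"
    using assms(1) by (simp add: one_le_power)
  moreover have "0 \<le> a * b * c\<^sup>2"
    using assms(1,2) by simp
  ultimately show ?thesis
    using assms(4) by linarith
qed

lemma sqrt_le_dist_sqrt_spiral:
  assumes "C > 0" "badly_approx_const \<alpha> C" "1 \<le> n" "n < m"
  shows "sqrt C \<le> norm (sqrt_spiral \<alpha> m - sqrt_spiral \<alpha> n)"
proof -
  define c where "c = norm (cis (2 * pi * (real m * \<alpha>)) - cis (2 * pi * (real n * \<alpha>)))"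
  define t where "t = real (m - n) * \<alpha>"
  have mn: "real (m - n) = (sqrt (real m))\<^sup>2 - (sqrt (real n))\<^sup>2" "1 \<le> m - n"
    using assms(4) by (simp_all add: of_nat_diff)
  have "C \<le> real (m - n) * \<bar>t - of_int (round t)\<bar>"
    using assms(2) mn(2) unfolding badly_approx_const_def t_def by blast
  also have "\<dots> \<le> real (m - n) * (c / 2)"
    using norm_cis_2pi_diff_ge[of "real m * \<alpha>" "real n * \<alpha>"] assms(4)
    by (intro mult_left_mono) (simp_all add: c_def t_def of_nat_diff algebra_simps)
  finally have "C \<le> (sqrt (real m) - sqrt (real n))\<^sup>2 + sqrt (real n) * sqrt (real m) * c\<^sup>2"
    using assms badly_approx_const_le_half[OF assms(2)]
    by (intro le_sq_diff_plus_mult_sq) (simp_all add: mn(1))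
  then have "C \<le> (norm (sqrt_spiral \<alpha> m - sqrt_spiral \<alpha> n))\<^sup>2"
    using norm_sqrt_spiral_diff_sq[of \<alpha> m n] by (simp add: c_def mult_ac)
  then show ?thesis
    by (rule real_le_lsqrt[rotated]) simp
qed

lemma unif_discrete_if_badly_approx_const:
  assumes "C > 0" "badly_approx_const \<alpha> C"
  shows "unif_discrete (sqrt C / 2) (Xsqrt \<alpha>)"
proof -
  have "sqrt C \<le> dist (sqrt_spiral \<alpha> m) (sqrt_spiral \<alpha> n)" if "1 \<le> n" "n < m" for m n
    using sqrt_le_dist_sqrt_spiral[OF assms that] by (simp add: dist_norm)
  then have "sqrt C \<le> dist (sqrt_spiral \<alpha> m) (sqrt_spiral \<alpha> n)" if "1 \<le> n" "1 \<le> m" "n \<noteq> m" for m n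
    using that by (metis dist_commute linorder_neqE_nat)
  then show ?thesis
    unfolding unif_discrete_iff Xsqrt_eq_image by force
qed

lemma sq_sqrt_add_diff_le:
  fixes n Q s :: real
  assumes "0 < n" "0 \<le> Q" "Q\<^sup>2 \<le> 2 * s\<^sup>2 * n"
  shows "(sqrt (n + Q) - sqrt n)\<^sup>2 \<le> s\<^sup>2 / 2"
proof -
  define a b where "a = sqrt n" and "b = sqrt (n + Q)"
  have ab: "0 < a" "a \<le> b" "b\<^sup>2 - a\<^sup>2 = Q" "a\<^sup>2 = n"
    using assms by (simp_all add: a_def b_def)
  have "(b - a) * (2 * a) \<le> (b - a) * (b + a)"
    using ab by (intro mult_left_mono) auto
  also have "\<dots> = Q"
    using ab(3) by (simp add: power2_eq_square algebra_simps)
  finally have "((b - a) * (2 * a))\<^sup>2 \<le> Q\<^sup>2"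
    using ab by (intro power_mono) auto
  moreover have "((b - a) * (2 * a))\<^sup>2 = (b - a)\<^sup>2 * (4 * n)"
    using ab(4) by (simp add: power_mult_distrib)
  moreover have "2 * s\<^sup>2 * n = s\<^sup>2 / 2 * (4 * n)"
    by simp
  ultimately have "(b - a)\<^sup>2 * (4 * n) \<le> s\<^sup>2 / 2 * (4 * n)"
    using assms(3) by linarith
  then show ?thesis
    using assms(1) by (simp add: a_def b_def)
qed

lemma sqrt_mult_sq_le_of_small_error:
  fixes n Q s e c :: real
  assumes "0 < s" "s \<le> 5 / 4" "1 \<le> Q" "0 \<le> n" "n \<le> Q\<^sup>2 / (2 * s\<^sup>2) + 1"
    and "Q * \<bar>e\<bar> \<le> s\<^sup>2 / 53" "0 \<le> c" "c \<le> 2 * pi * \<bar>e\<bar>"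
  shows "sqrt (n + Q) * sqrt n * c\<^sup>2 \<le> s\<^sup>2"
proof -
  define K where "K = 1 / (2 * s\<^sup>2) + 2"
  have "sqrt (n + Q) * sqrt n \<le> n + Q"
    using assms(3,4) real_sqrt_le_mono[of n "n + Q"] mult_left_mono[of "sqrt n" "sqrt (n + Q)" "sqrt (n + Q)"]
    by simp
  also have "\<dots> \<le> Q\<^sup>2 * K"
  proof -
    have "Q \<le> Q\<^sup>2"
      using assms(3) mult_right_mono[of 1 Q Q] by (simp add: power2_eq_square)
    moreover have "Q\<^sup>2 * K = Q\<^sup>2 / (2 * s\<^sup>2) + 2 * Q\<^sup>2"
      by (simp add: K_def algebra_simps)
    ultimately show ?thesis
      using assms(3,5) by linarith
  qed
  finally have ab: "sqrt (n + Q) * sqrt n \<le> Q\<^sup>2 * K" .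
  have c: "c\<^sup>2 \<le> 4 * pi\<^sup>2 * e\<^sup>2"
    using power_mono[OF assms(8,7), of 2] by (simp add: power_mult_distrib)
  have "sqrt (n + Q) * sqrt n * c\<^sup>2 \<le> Q\<^sup>2 * K * (4 * pi\<^sup>2 * e\<^sup>2)"
    by (rule mult_mono[OF ab c]) (simp_all add: K_def)
  also have "\<dots> = 4 * pi\<^sup>2 * K * (Q * \<bar>e\<bar>)\<^sup>2"
    by (simp add: power_mult_distrib)
  also have "\<dots> \<le> 4 * pi\<^sup>2 * K * (s\<^sup>2 / 53)\<^sup>2"
    using assms(3,6) by (intro mult_left_mono power_mono) (auto simp: K_def)
  also have "\<dots> = 4 * pi\<^sup>2 * (s\<^sup>2 / 2 + 2 * s\<^sup>2 * s\<^sup>2) / 2809"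
    using assms(1) by (simp add: K_def field_simps power2_eq_square)
  also have "\<dots> \<le> 4 * 4\<^sup>2 * (s\<^sup>2 / 2 + 2 * s\<^sup>2 * (5 / 4)\<^sup>2) / 2809"
    using assms(1,2) pi_gt_zero pi_less_4
    by (intro divide_right_mono mult_mono add_mono mult_left_mono power_mono) auto
  also have "\<dots> \<le> s\<^sup>2"
    by (simp add: power2_eq_square)
  finally show ?thesis .
qed

lemma norm_sqrt_spiral_diff_2_1_le: "norm (sqrt_spiral \<alpha> 2 - sqrt_spiral \<alpha> 1) \<le> 5 / 2"
proof -
  have "norm (sqrt_spiral \<alpha> 2 - sqrt_spiral \<alpha> 1) \<le> sqrt 2 + 1"
    using norm_triangle_ineq4[of "sqrt_spiral \<alpha> 2" "sqrt_spiral \<alpha> 1"] by simp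
  also have "sqrt 2 \<le> 3 / 2"
    by (rule real_le_lsqrt) (simp_all add: power2_eq_square)
  finally show ?thesis
    by simp
qed

lemma badly_approx_const_if_separated:
  assumes "0 < s"
    and sep: "\<And>m n. 1 \<le> m \<Longrightarrow> 1 \<le> n \<Longrightarrow> m \<noteq> n \<Longrightarrow> 2 * s \<le> norm (sqrt_spiral \<alpha> m - sqrt_spiral \<alpha> n)"
  shows "badly_approx_const \<alpha> (s\<^sup>2 / 53)"
  unfolding badly_approx_const_def
proof (intro allI impI, rule ccontr)
  fix p :: int and q :: nat
  assume "1 \<le> q" and "\<not> s\<^sup>2 / 53 \<le> real q * \<bar>real q * \<alpha> - of_int p\<bar>"
  then have Q: "1 \<le> real q" and small: "real q * \<bar>real q * \<alpha> - of_int p\<bar> \<le> s\<^sup>2 / 53"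
    by simp_all
  have s54: "s \<le> 5 / 4"
    using sep[of 2 1] norm_sqrt_spiral_diff_2_1_le[of \<alpha>] by simp
  define n where "n = nat \<lceil>(real q)\<^sup>2 / (2 * s\<^sup>2)\<rceil>"
  have pos: "0 < (real q)\<^sup>2 / (2 * s\<^sup>2)"
    using Q assms(1) by simp
  then have n: "(real q)\<^sup>2 / (2 * s\<^sup>2) \<le> real n" "real n \<le> (real q)\<^sup>2 / (2 * s\<^sup>2) + 1"
    by (simp_all add: n_def)
  then have "1 \<le> n"
    using pos by linarith
  define c where "c = norm (cis (2 * pi * (real (n + q) * \<alpha>)) - cis (2 * pi * (real n * \<alpha>)))"
  have c: "0 \<le> c" "c \<le> 2 * pi * \<bar>real q * \<alpha> - of_int p\<bar>"
    using norm_cis_2pi_diff_le[of "real (n + q) * \<alpha>" "real n * \<alpha>" p]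
    by (simp_all add: c_def algebra_simps)
  have "(2 * s)\<^sup>2 \<le> (norm (sqrt_spiral \<alpha> (n + q) - sqrt_spiral \<alpha> n))\<^sup>2"
    using sep[of "n + q" n] \<open>1 \<le> n\<close> \<open>1 \<le> q\<close> assms(1) by (intro power_mono) auto
  also have "\<dots> = (sqrt (real n + real q) - sqrt (real n))\<^sup>2 + sqrt (real n + real q) * sqrt (real n) * c\<^sup>2"
    by (simp add: norm_sqrt_spiral_diff_sq c_def)
  also have "\<dots> \<le> s\<^sup>2 / 2 + s\<^sup>2"
  proof (intro add_mono)
    show "(sqrt (real n + real q) - sqrt (real n))\<^sup>2 \<le> s\<^sup>2 / 2"
      using n(1) \<open>1 \<le> n\<close> assms(1) by (intro sq_sqrt_add_diff_le) (simp_all add: field_simps)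
    show "sqrt (real n + real q) * sqrt (real n) * c\<^sup>2 \<le> s\<^sup>2"
      using n(2) small c assms(1) s54 Q by (intro sqrt_mult_sq_le_of_small_error) auto
  qed
  finally show False
    using assms(1) by (simp add: power_mult_distrib)
qed

lemma badly_approx_const_if_unif_discrete:
  assumes "0 < s" "unif_discrete s (Xsqrt \<alpha>)"
  shows "badly_approx_const \<alpha> (s\<^sup>2 / 53)"
proof (rule badly_approx_const_if_separated[OF assms(1)])
  fix m n :: nat assume "1 \<le> m" "1 \<le> n" "m \<noteq> n"
  moreover have "sqrt_spiral \<alpha> m \<noteq> sqrt_spiral \<alpha> n"
    using \<open>m \<noteq> n\<close> by (metis norm_sqrt_spiral of_nat_eq_iff real_sqrt_eq_iff)
  ultimately show "2 * s \<le> norm (sqrt_spiral \<alpha> m - sqrt_spiral \<alpha> n)"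
    using assms(2) unfolding unif_discrete_iff Xsqrt_eq_image by (auto simp: dist_norm)
qed

subsection \<open>Relative density\<close>

lemma half_integer_gap:
  fixes j :: int and q :: real
  assumes "0 < q"
  shows "1 / (2 * q) - \<bar>v\<bar> \<le> \<bar>(of_int j - 1 / 2) / q + v\<bar>"
proof -
  have "1 / 2 \<le> \<bar>of_int j - 1 / 2 :: real\<bar>"
    by (cases "j \<ge> 1") auto
  then have "1 / (2 * q) \<le> \<bar>(of_int j - 1 / 2) / q\<bar>"
    using assms by (simp add: field_simps)
  then show ?thesis
    using abs_triangle_ineq2[of "(of_int j - 1 / 2) / q + v" v] by (simp add: abs_minus_commute)
qed

lemma dist_round_ge_of_good_approx:
  fixes p :: int and q n :: nat
  assumes q: "1 \<le> q" and small: "\<bar>real n - T\<bar> * \<bar>real q * \<alpha> - of_int p\<bar> \<le> 7 / 96"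
  defines "w \<equiv> real n * \<alpha> - (1 / (2 * real q) + T * (real q * \<alpha> - of_int p) / real q)"
  shows "41 / (96 * real q) \<le> \<bar>w - of_int (round w)\<bar>"
proof -
  define e where "e = real q * \<alpha> - of_int p"
  have "w - of_int (round w) = (of_int (int n * p - round w * int q) - 1 / 2) / real q + (real n - T) * e / real q"
    using q by (simp add: w_def e_def field_simps)
  moreover have "\<bar>(real n - T) * e / real q\<bar> = \<bar>real n - T\<bar> * \<bar>e\<bar> / real q"
    by (simp add: abs_mult)
  moreover have "\<bar>real n - T\<bar> * \<bar>e\<bar> / real q \<le> 7 / (96 * real q)"
    using divide_right_mono[OF small, of "real q"] by (simp add: e_def)
  ultimately have "1 / (2 * real q) - 7 / (96 * real q) \<le> \<bar>w - of_int (round w)\<bar>"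
    using half_integer_gap[of "real q" "(real n - T) * e / real q" "int n * p - round w * int q"] q
    by simp
  then show ?thesis
    by simp
qed

text \<open>The witness point has radius R = 3 q r and an angle \<phi> halfway between two multiples of 1/q,
  corrected by R^2 e / q so that n \<alpha> - \<phi> = (n p - 1/2) / q + (n - R^2) e / q modulo 1.\<close>

lemma dist_ge_of_good_approx:
  fixes p :: int and q n :: nat
  assumes r: "0 < r" and q: "1 \<le> q" and approx: "real q * \<bar>real q * \<alpha> - of_int p\<bar> \<le> 1 / (96 * r\<^sup>2)"
  defines "R \<equiv> 3 * real q * r"
  defines "\<phi> \<equiv> 1 / (2 * real q) + R\<^sup>2 * (real q * \<alpha> - of_int p) / real q"
  shows "r \<le> dist (of_real R * cis (2 * pi * \<phi>)) (sqrt_spiral \<alpha> n)"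
proof -
  have R: "0 \<le> R" "2 * real q * r \<le> R - r"
    using r q by (simp_all add: R_def)
  have dist_eq: "dist (of_real R * cis (2 * pi * \<phi>)) (sqrt_spiral \<alpha> n)
      = norm (of_real (sqrt (real n)) * cis (2 * pi * (real n * \<alpha>)) - of_real R * cis (2 * pi * \<phi>))"
    by (simp add: dist_norm sqrt_spiral_def norm_minus_commute)
  show ?thesis
  proof (cases "r \<le> \<bar>sqrt (real n) - R\<bar>")
    case True
    then show ?thesis
      using norm_triangle_ineq3[of "of_real (sqrt (real n)) * cis (2 * pi * (real n * \<alpha>))" "of_real R * cis (2 * pi * \<phi>)"] R
      by (simp add: dist_eq norm_mult)
  next
    case False
    have "\<bar>real n - R\<^sup>2\<bar> \<le> r * (2 * R + r)"
      using False R by (intro abs_diff_sq_le) auto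
    also have "\<dots> \<le> 7 * real q * r\<^sup>2"
      using q r mult_right_mono[of 1 "real q" "r\<^sup>2"] by (simp add: R_def power2_eq_square algebra_simps)
    finally have "\<bar>real n - R\<^sup>2\<bar> * \<bar>real q * \<alpha> - of_int p\<bar> \<le> 7 * real q * r\<^sup>2 * \<bar>real q * \<alpha> - of_int p\<bar>"
      by (rule mult_right_mono) simp
    also have "\<dots> = 7 * r\<^sup>2 * (real q * \<bar>real q * \<alpha> - of_int p\<bar>)"
      by (simp add: mult_ac)
    also have "\<dots> \<le> 7 / 96"
      using approx r by (simp add: field_simps)
    finally have "41 / (96 * real q) \<le> \<bar>real n * \<alpha> - \<phi> - of_int (round (real n * \<alpha> - \<phi>))\<bar>"
      using dist_round_ge_of_good_approx[OF q] unfolding \<phi>_def by blast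
    then have "82 / (96 * real q) \<le> norm (cis (2 * pi * (real n * \<alpha>)) - cis (2 * pi * \<phi>))"
      using norm_cis_2pi_diff_ge[of "real n * \<alpha>" \<phi>] by (simp add: field_simps)
    moreover have "2 * real q * r \<le> min (sqrt (real n)) R"
      using False R by auto
    ultimately have "2 * real q * r * (82 / (96 * real q)) \<le> min (sqrt (real n)) R * norm (cis (2 * pi * (real n * \<alpha>)) - cis (2 * pi * \<phi>))"
      using q r R(1) by (intro mult_mono) auto
    also have "\<dots> \<le> dist (of_real R * cis (2 * pi * \<phi>)) (sqrt_spiral \<alpha> n)"
      unfolding dist_eq using R by (intro min_mult_norm_le_norm_polar_diff) auto
    finally show ?thesis
      using q r by (simp add: field_simps)
  qed
qed

lemma badly_approx_const_if_rel_dense: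
  assumes "0 < r" "rel_dense r (Xsqrt \<alpha>)"
  shows "badly_approx_const \<alpha> (1 / (96 * r\<^sup>2))"
  unfolding badly_approx_const_def
proof (intro allI impI, rule ccontr)
  fix p :: int and q :: nat
  assume "1 \<le> q" "\<not> 1 / (96 * r\<^sup>2) \<le> real q * \<bar>real q * \<alpha> - of_int p\<bar>"
  then obtain x where far: "\<forall>n. r \<le> dist x (sqrt_spiral \<alpha> n)"
    using dist_ge_of_good_approx[OF assms(1) \<open>1 \<le> q\<close>] by (meson linorder_not_le less_imp_le)
  have "y \<notin> ball x r" if "y \<in> Xsqrt \<alpha>" for y
    using that far unfolding Xsqrt_eq_image by (auto simp: not_less)
  then have "ball x r \<inter> Xsqrt \<alpha> = {}"
    by blast
  then show False
    using assms(2) unfolding rel_dense_def by blast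
qed

lemma exists_index_near:
  fixes p q :: int
  assumes "coprime p q" "1 \<le> q" "of_int q / 2 < T"
  shows "\<exists>n\<ge>1. \<bar>real n - T\<bar> \<le> of_int q / 2 \<and>
    (\<exists>l::int. \<bar>real n * \<alpha> - \<theta> - of_int l\<bar> \<le> 1 / (2 * of_int q) + \<bar>of_int q * \<alpha> - of_int p\<bar>)"
proof -
  define M where "M = nat \<lceil>T - of_int q / 2\<rceil>"
  have M: "T - of_int q / 2 \<le> real M" "real M < T - of_int q / 2 + 1"
    using assms(3) by (simp_all add: M_def) linarith
  obtain m l where m: "int m < q"
    and l: "\<bar>real m * \<alpha> - (\<theta> - real M * \<alpha>) - of_int l\<bar> \<le> 1 / (2 * of_int q) + \<bar>of_int q * \<alpha> - of_int p\<bar>"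
    using exists_multiple_near_shift[OF assms(1,2), of \<alpha> "\<theta> - real M * \<alpha>"] by blast
  have "real m \<le> of_int q - 1"
    using m by linarith
  then have "\<bar>real (M + m) - T\<bar> \<le> of_int q / 2"
    using M by (intro abs_leI) auto
  moreover have "1 \<le> M + m"
    using M(1) assms(3) by (simp add: Suc_le_eq)
  moreover have "real (M + m) * \<alpha> - \<theta> - of_int l = real m * \<alpha> - (\<theta> - real M * \<alpha>) - of_int l"
    by (simp add: algebra_simps)
  ultimately show ?thesis
    using l by metis
qed

lemma approx_error_le:
  fixes B N q e :: real
  assumes "1 \<le> B" "1 \<le> N" "0 < q" "N < (B + 1) * q" "N * \<bar>e\<bar> \<le> 1"
  shows "1 / (2 * q) + \<bar>e\<bar> \<le> 2 * B / N"
proof -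
  have "1 / (2 * q) \<le> (B + 1) / (2 * N)"
    using assms by (simp add: field_simps)
  moreover have "\<bar>e\<bar> \<le> 1 / N"
    using assms(2,5) by (simp add: field_simps)
  moreover have "(B + 1) / (2 * N) + 1 / N \<le> 2 * B / N"
    using assms(1,2) by (simp add: field_simps)
  ultimately show ?thesis
    by linarith
qed

lemma radial_plus_angular_lt:
  fixes b R N :: real
  assumes "1 \<le> b" "5 \<le> R" "5 * b * R \<le> N" "N \<le> 5 * b * R + 1"
  shows "N / (2 * R) + 2 * pi * R * (2 * b\<^sup>2 / N) < 6 * b"
proof -
  have pos: "0 < 5 * b * R"
    using assms(1,2) by simp
  have "N / (2 * R) \<le> (5 * b * R + 1) / (2 * R)"
    using assms by (intro divide_right_mono) auto
  also have "\<dots> \<le> 5 / 2 * b + 1 / 10"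
    using assms(2) by (simp add: field_simps)
  finally have radial: "N / (2 * R) \<le> 5 / 2 * b + 1 / 10" .
  have "2 * pi * R * (2 * b\<^sup>2 / N) = 4 * pi * R * b\<^sup>2 / N"
    by simp
  also have "\<dots> \<le> 4 * pi * R * b\<^sup>2 / (5 * b * R)"
    using assms(2,3) pos by (intro divide_left_mono) (simp_all add: mult_pos_pos order_less_le_trans[OF pos])
  also have "\<dots> = 4 * pi / 5 * b"
    using pos assms(2) by (simp add: field_simps power2_eq_square)
  also have "\<dots> < 16 / 5 * b"
    using pi_less_4 assms(1) by simp
  finally show ?thesis
    using radial assms(1) by linarith
qed

lemma exists_index_near_circle:
  fixes N B :: nat
  assumes "0 \<le> \<alpha>" "\<alpha> < 1" "badly_approx \<alpha>" "pq_bounded \<alpha> B" "0 < B" "1 \<le> N" "real N / 2 < T"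
  shows "\<exists>n\<ge>1. \<bar>real n - T\<bar> \<le> real N / 2 \<and> (\<exists>l::int. \<bar>real n * \<alpha> - \<theta> - of_int l\<bar> \<le> 2 * real B / real N)"
proof -
  obtain p q where pq: "coprime p q" "1 \<le> q" "q \<le> int N" "int N < (int B + 1) * q"
    and approx: "real N * \<bar>of_int q * \<alpha> - of_int p\<bar> \<le> 1"
    using exists_convergent_bracket[OF assms(1,2) _ assms(4,6)]
      cf_rem_nonzero_if_badly_approx[OF assms(1-3)] by blast
  have "real_of_int (int N) < real_of_int ((int B + 1) * q)"
    using pq(4) by (simp only: of_int_less_iff)
  then have err: "1 / (2 * of_int q) + \<bar>of_int q * \<alpha> - of_int p\<bar> \<le> 2 * real B / real N"
    using assms(5,6) pq(2) approx by (intro approx_error_le) auto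
  have qN: "of_int q \<le> real N"
    using pq(3) by (metis of_int_le_iff of_int_of_nat_eq)
  then obtain n l where "1 \<le> n" "\<bar>real n - T\<bar> \<le> of_int q / 2"
    and "\<bar>real n * \<alpha> - \<theta> - of_int l\<bar> \<le> 1 / (2 * of_int q) + \<bar>of_int q * \<alpha> - of_int p\<bar>"
    using exists_index_near[OF pq(1,2), of T \<alpha> \<theta>] assms(7) by auto
  then show ?thesis
    using qN err by (intro exI[of _ n] conjI exI[of _ l]) auto
qed

lemma exists_sqrt_spiral_near:
  assumes "0 \<le> \<alpha>" "\<alpha> < 1" "0 < B" "badly_approx \<alpha>" "pq_bounded \<alpha> B"
    and large: "5 * sqrt (real B) \<le> norm x" "5 \<le> norm x"
  shows "\<exists>n\<ge>1. dist x (sqrt_spiral \<alpha> n) < 6 * sqrt (real B)"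
proof -
  define R where "R = norm x"
  have R: "5 * sqrt (real B) \<le> R" "5 \<le> R"
    using large by (simp_all add: R_def)
  have sB: "1 \<le> sqrt (real B)"
    using assms(3) by simp
  \<comment> \<open>N balances the radial error N / (2 R) against the angular error 4 pi R B / N.\<close>
  define N where "N = nat \<lceil>5 * sqrt (real B) * R\<rceil>"
  have "25 \<le> 5 * sqrt (real B) * R"
    using sB R mult_mono[of 5 "5 * sqrt (real B)" 5 R] by simp
  then have N: "5 * sqrt (real B) * R \<le> real N" "real N \<le> 5 * sqrt (real B) * R + 1"
    by (simp_all add: N_def)
  have "5 * sqrt (real B) * R \<le> R * R"
    using R by (intro mult_right_mono) auto
  then have "real N / 2 < R\<^sup>2"
    using N(2) \<open>25 \<le> 5 * sqrt (real B) * R\<close> unfolding power2_eq_square by linarith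
  moreover have "1 \<le> N"
    using N(1) \<open>25 \<le> 5 * sqrt (real B) * R\<close> by linarith
  ultimately obtain n l where n: "1 \<le> n" "\<bar>real n - R\<^sup>2\<bar> \<le> real N / 2"
    and l: "\<bar>real n * \<alpha> - Arg x / (2 * pi) - of_int l\<bar> \<le> 2 * real B / real N"
    using exists_index_near_circle[OF assms(1,2,4,5,3)] by blast
  have radial: "\<bar>sqrt (real n) - R\<bar> \<le> real N / (2 * R)"
    using abs_sqrt_diff_le[of "real n" R] n(2) R by (simp add: field_simps)
  have x: "of_real R * cis (Arg x) = x"
    using rcis_cmod_Arg[of x] by (simp add: rcis_def R_def)
  have "dist x (sqrt_spiral \<alpha> n) \<le> \<bar>sqrt (real n) - R\<bar> + 2 * pi * R * \<bar>real n * \<alpha> - Arg x / (2 * pi) - of_int l\<bar>"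
    using dist_polar_sqrt_spiral_le[of R "Arg x / (2 * pi)" \<alpha> n l] R by (simp add: x)
  also have "\<dots> \<le> real N / (2 * R) + 2 * pi * R * (2 * real B / real N)"
    using radial l R by (intro add_mono mult_left_mono) auto
  also have "\<dots> < 6 * sqrt (real B)"
    using radial_plus_angular_lt[of "sqrt (real B)" R "real N"] sB R N by simp
  finally show ?thesis
    using n(1) by blast
qed

lemma rel_dense_if_pq_bounded:
  assumes "0 \<le> \<alpha>" "\<alpha> < 1" "0 < B" "badly_approx \<alpha>" "pq_bounded \<alpha> B"
  shows "rel_dense (6 * sqrt (real B)) (Xsqrt \<alpha>)"
  unfolding rel_dense_def
proof
  fix x :: complex
  have "\<exists>n\<ge>1. dist x (sqrt_spiral \<alpha> n) < 6 * sqrt (real B)"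
  proof (cases "norm x < 6 * sqrt (real B) - 1")
    case True
    have "dist x (sqrt_spiral \<alpha> 1) \<le> norm x + 1"
      using norm_triangle_ineq4[of x "sqrt_spiral \<alpha> 1"] by (simp add: dist_norm)
    then show ?thesis
      using True by (intro exI[of _ 1]) simp
  next
    case False
    moreover have "1 \<le> sqrt (real B)"
      using assms(3) by simp
    ultimately show ?thesis
      by (intro exists_sqrt_spiral_near[OF assms]) linarith+
  qed
  then show "ball x (6 * sqrt (real B)) \<inter> Xsqrt \<alpha> \<noteq> {}"
    by (auto simp: Xsqrt_eq_image)
qed

theorem theorem3:
  fixes \<alpha> :: real
  assumes "0 \<le> \<alpha>" and "\<alpha> < 1"
  shows "(\<forall>B::nat. B > 0 \<longrightarrow> badly_approx \<alpha> \<longrightarrow> pq_bounded \<alpha> B \<longrightarrow>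
            rel_dense (6 * sqrt (real B)) (Xsqrt \<alpha>))
       \<and> (\<forall>r::real. r > 0 \<longrightarrow> rel_dense r (Xsqrt \<alpha>) \<longrightarrow>
            badly_approx \<alpha> \<and> pq_bounded \<alpha> (nat \<lfloor>96 * r\<^sup>2\<rfloor>))
       \<and> (\<forall>C::real. C > 0 \<longrightarrow> badly_approx_const \<alpha> C \<longrightarrow>
            unif_discrete (sqrt C / 2) (Xsqrt \<alpha>))
       \<and> (\<forall>s::real. s > 0 \<longrightarrow> unif_discrete s (Xsqrt \<alpha>) \<longrightarrow>
            badly_approx_const \<alpha> (s\<^sup>2 / 53))"
proof (intro conjI allI impI)
  fix B :: nat
  assume "B > 0" "badly_approx \<alpha>" "pq_bounded \<alpha> B"
  then show "rel_dense (6 * sqrt (real B)) (Xsqrt \<alpha>)"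
    by (rule rel_dense_if_pq_bounded[OF assms])
next
  fix r :: real
  assume "r > 0" "rel_dense r (Xsqrt \<alpha>)"
  then have C: "badly_approx_const \<alpha> (1 / (96 * r\<^sup>2))"
    by (rule badly_approx_const_if_rel_dense)
  moreover have "0 < 1 / (96 * r\<^sup>2)"
    using \<open>r > 0\<close> by simp
  ultimately show "badly_approx \<alpha>"
    unfolding badly_approx_def by blast
  show "pq_bounded \<alpha> (nat \<lfloor>96 * r\<^sup>2\<rfloor>)"
    using pq_bounded_if_badly_approx_const[OF assms \<open>0 < 1 / (96 * r\<^sup>2)\<close> C] by simp
next
  fix C :: real
  assume "C > 0" "badly_approx_const \<alpha> C"
  then show "unif_discrete (sqrt C / 2) (Xsqrt \<alpha>)"
    by (rule unif_discrete_if_badly_approx_const)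
next
  fix s :: real
  assume "s > 0" "unif_discrete s (Xsqrt \<alpha>)"
  then show "badly_approx_const \<alpha> (s\<^sup>2 / 53)"
    by (rule badly_approx_const_if_unif_discrete)
qed

end
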